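(* Let $r,q$ be positive integers with $q\ge r+1$, and let $G$ be a $2q$-path degenerate graph. Define $f(0)=1$ and, for integers $x\ge1$, \[ f(x)=\begin{cases} x+2+\log_2\!\left(\frac{q-1}{q-x}\right), & \text{if } q<2r,\\ x+2, & \text{otherwise.}\end{cases} \] Then $G$ has a good linear order with respect to $f$ up to $r$.
   Context: Graphs are finite and simple. A strict ear of a graph $G$ is a path of $G$ whose internal vertices all have degree $2$ in $G$ and whose two endpoints are distinct. For an integer $p\ge1$, a $p$-reduction of $G$ is the deletion of either an isolated vertex, or a vertex of degree $1$, or the internal vertices of a strict ear of $G$ of length at least $p$. A graph is $p$-path degenerate if it can be reduced to the empty graph by a sequence of $p$-reductions. For a linear order $\pi$ of $V(G)$, an integer $x\ge0$ and $u,v\in V(G)$, $u$ is weakly $x$-reachable from $v$ under $\pi$ if $u\le_\pi v$ and there is a $u$–$v$ path $P$ of length at most $x$ such that $u<_\pi w$ for every internal vertex $w$ of $P$. $\mathrm{WReach}_x[G,\pi,v]$ is the set of vertices weakly $x$-reachable from $v$. A linear order $\pi$ of $V(G)$ is a good linear order with respect to $f$ up to $r$ if $\max_{v\in V(G)}|\mathrm{WReach}_x[G,\pi,v]|\le f(x)$ for every integer $0\le x\le r$. *)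

theory Defs
  imports Complex_Main
begin

definition graph :: "'a set \<Rightarrow> 'a set set \<Rightarrow> bool" where
  "graph V E \<longleftrightarrow> finite V \<and> (\<forall>e\<in>E. \<exists>u v. e = {u, v} \<and> u \<noteq> v \<and> u \<in> V \<and> v \<in> V)"

definition degree :: "'a set set \<Rightarrow> 'a \<Rightarrow> nat" where
  "degree E v = card {u. {u, v} \<in> E}"

definition is_path :: "'a set \<Rightarrow> 'a set set \<Rightarrow> 'a list \<Rightarrow> bool" where
  "is_path V E ps \<longleftrightarrow> ps \<noteq> [] \<and> distinct ps \<and> set ps \<subseteq> V \<and>
     (\<forall>i. Suc i < length ps \<longrightarrow> {ps ! i, ps ! Suc i} \<in> E)"

definition path_len :: "'a list \<Rightarrow> nat" where
  "path_len ps = length ps - 1"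

definition internal :: "'a list \<Rightarrow> 'a set" where
  "internal ps = {ps ! i | i. 0 < i \<and> Suc i < length ps}"

definition strict_ear :: "'a set \<Rightarrow> 'a set set \<Rightarrow> 'a list \<Rightarrow> bool" where
  "strict_ear V E ps \<longleftrightarrow> is_path V E ps \<and> hd ps \<noteq> last ps \<and>
     (\<forall>w\<in>internal ps. degree E w = 2)"

definition delete_vertices :: "'a set \<Rightarrow> 'a set \<Rightarrow> 'a set set \<Rightarrow> 'a set \<times> 'a set set" where
  "delete_vertices S V E = (V - S, {e\<in>E. e \<inter> S = {}})"

definition p_reduction :: "nat \<Rightarrow> 'a set \<Rightarrow> 'a set set \<Rightarrow> 'a set \<Rightarrow> 'a set set \<Rightarrow> bool" where
  "p_reduction p V E V' E' \<longleftrightarrow>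
     (\<exists>v\<in>V. degree E v = 0 \<and> (V', E') = delete_vertices {v} V E) \<or>
     (\<exists>v\<in>V. degree E v = 1 \<and> (V', E') = delete_vertices {v} V E) \<or>
     (\<exists>ps. strict_ear V E ps \<and> path_len ps \<ge> p \<and> (V', E') = delete_vertices (internal ps) V E)"

inductive path_degenerate :: "nat \<Rightarrow> 'a set \<Rightarrow> 'a set set \<Rightarrow> bool" for p where
  empty: "path_degenerate p {} {}"
| step: "p_reduction p V E V' E' \<Longrightarrow> path_degenerate p V' E' \<Longrightarrow> path_degenerate p V E"

text \<open>Weak reachability w.r.t. a linear order L on V (pairs (a,b) meaning a \<le> b).\<close>
definition WReach :: "'a set \<Rightarrow> 'a set set \<Rightarrow> ('a \<times> 'a) set \<Rightarrow> nat \<Rightarrow> 'a \<Rightarrow> 'a set" where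
  "WReach V E L x v = {u \<in> V. (u, v) \<in> L \<and>
     (\<exists>ps. is_path V E ps \<and> hd ps = u \<and> last ps = v \<and> path_len ps \<le> x \<and>
        (\<forall>w\<in>internal ps. (u, w) \<in> L \<and> u \<noteq> w))}"

definition good_linear_order :: "'a set \<Rightarrow> 'a set set \<Rightarrow> ('a \<times> 'a) set \<Rightarrow> (nat \<Rightarrow> real) \<Rightarrow> nat \<Rightarrow> bool" where
  "good_linear_order V E L f r \<longleftrightarrow> linear_order_on V L \<and>
     (\<forall>x\<le>r. \<forall>v\<in>V. real (card (WReach V E L x v)) \<le> f x)"

end

(*
  The order is built by undoing the reductions one at a time, always putting the
  reinserted vertices after the vertices of the smaller graph.  Since x <= r < q,
  no path of length at most x between old vertices can pass through a reinserted
  vertex, so weak reachability from old vertices does not change.  A reinserted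
  vertex of degree at most one weakly x-reaches only itself and what its neighbour
  weakly (x-1)-reaches.  The inner vertices of a reinserted ear W_0 ... W_m, where
  m >= 2q, are ordered W_q, W_1, W_(m-1), W_2, W_(m-2), ...  Then W_i with i <= q
  weakly x-reaches only the ear vertices between W_0 and W_i within distance x,
  vertices weakly (x-i)-reachable from W_0 in the smaller graph, and W_q when
  q <= x + i; symmetrically for i > q.  The logarithmic term of f pays for W_q:
  if q <= x + i and i < x, then q - x is at most half of q - (x - i), so
  (q-1)/(q-x) is at least twice (q-1)/(q-(x-i)).  This case needs q < 2r.
*)
theory Submission
  imports Defs
begin

lemma is_path_nonempty: "is_path V E ps \<Longrightarrow> ps \<noteq> []"
  and is_path_distinct: "is_path V E ps \<Longrightarrow> distinct ps"
  and is_path_set: "is_path V E ps \<Longrightarrow> set ps \<subseteq> V"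
  and is_path_edge: "is_path V E ps \<Longrightarrow> Suc i < length ps \<Longrightarrow> {ps ! i, ps ! Suc i} \<in> E"
  unfolding is_path_def by auto

lemma is_path_drop: "is_path V E ps \<Longrightarrow> k < length ps \<Longrightarrow> is_path V E (drop k ps)"
  unfolding is_path_def by (auto dest: in_set_dropD)

lemma is_path_take: "is_path V E ps \<Longrightarrow> 0 < k \<Longrightarrow> is_path V E (take k ps)"
  unfolding is_path_def by (auto dest: in_set_takeD)

lemma is_path_rev: "is_path V E ps \<Longrightarrow> is_path V E (rev ps)"
  unfolding is_path_def
proof (intro conjI allI impI)
  fix i assume ps: "ps \<noteq> [] \<and> distinct ps \<and> set ps \<subseteq> V \<and> (\<forall>i. Suc i < length ps \<longrightarrow> {ps ! i, ps ! Suc i} \<in> E)"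
    and i: "Suc i < length (rev ps)"
  have "{ps ! (length ps - Suc (Suc i)), ps ! Suc (length ps - Suc (Suc i))} \<in> E"
    using ps i by auto
  moreover have "Suc (length ps - Suc (Suc i)) = length ps - Suc i" using i by simp
  ultimately show "{rev ps ! i, rev ps ! Suc i} \<in> E"
    using i by (simp add: rev_nth insert_commute)
qed auto

lemma is_path_induced:
  assumes "is_path V E ps" and "set ps \<subseteq> V - S"
  shows "is_path (V - S) {e \<in> E. e \<inter> S = {}} ps"
  unfolding is_path_def
proof (intro conjI allI impI)
  fix i assume i: "Suc i < length ps"
  then have "ps ! i \<in> V - S" "ps ! Suc i \<in> V - S" using assms(2) nth_mem by (blast dest: Suc_lessD)+
  then show "{ps ! i, ps ! Suc i} \<in> {e \<in> E. e \<inter> S = {}}" using is_path_edge[OF assms(1) i] by auto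
qed (use assms in \<open>auto simp: is_path_def\<close>)

lemma path_len_rev [simp]: "path_len (rev ps) = path_len ps"
  by (simp add: path_len_def)

lemma internal_nth: "0 < i \<Longrightarrow> Suc i < length ps \<Longrightarrow> ps ! i \<in> internal ps"
  unfolding internal_def by auto

lemma internal_subset_set: "internal ps \<subseteq> set ps"
  unfolding internal_def by auto

lemma internal_rev [simp]: "internal (rev ps) = internal ps"
  unfolding internal_def
proof safe
  fix i assume "0 < i" "Suc i < length (rev ps)"
  then show "\<exists>j. rev ps ! i = ps ! j \<and> 0 < j \<and> Suc j < length ps"
    by (intro exI[of _ "length ps - Suc i"]) (auto simp: rev_nth)
next
  fix i assume "0 < i" "Suc i < length ps"
  then show "\<exists>j. ps ! i = rev ps ! j \<and> 0 < j \<and> Suc j < length (rev ps)"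
    by (intro exI[of _ "length ps - Suc i"]) (auto simp: rev_nth)
qed

lemma internal_drop_subset: "internal (drop k ps) \<subseteq> internal ps"
  unfolding internal_def
proof safe
  fix i assume "0 < i" "Suc i < length (drop k ps)"
  then show "\<exists>j. drop k ps ! i = ps ! j \<and> 0 < j \<and> Suc j < length ps"
    by (intro exI[of _ "k + i"]) auto
qed

lemma is_path_avoids_pendant:
  assumes p: "is_path V E ps" and nb: "\<forall>y. {y, v} \<in> E \<longrightarrow> y = w"
    and ends: "hd ps \<noteq> v" "last ps \<noteq> v"
  shows "v \<notin> set ps"
proof
  assume "v \<in> set ps"
  then obtain k where k: "k < length ps" "ps ! k = v" by (metis in_set_conv_nth)
  have ne: "ps \<noteq> []" using is_path_nonempty[OF p] .
  have "k \<noteq> 0" using k ends ne hd_conv_nth by metis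
  moreover have "Suc k < length ps"
    using k ends ne by (metis Suc_lessI diff_Suc_1 last_conv_nth)
  ultimately have "ps ! (k - 1) = w" "ps ! Suc k = w"
    using is_path_edge[OF p, of "k - 1"] is_path_edge[OF p, of k] k nb
    by (simp_all, metis insert_commute)
  moreover have "ps ! (k - 1) \<noteq> ps ! Suc k"
    using is_path_distinct[OF p] \<open>Suc k < length ps\<close> by (simp add: nth_eq_iff_index_eq)
  ultimately show False by simp
qed

lemma WReach_subset: "WReach V E L x v \<subseteq> V"
  unfolding WReach_def by auto

lemma finite_WReach: "finite V \<Longrightarrow> finite (WReach V E L x v)"
  using WReach_subset finite_subset by metis

text \<open>The witness path is returned reversed, running from \<open>v\<close> to \<open>u\<close>.\<close>
lemma WReachE:
  assumes "u \<in> WReach V E L x v"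
  obtains qs where "u \<in> V" "(u, v) \<in> L" "is_path V E qs" "hd qs = v" "last qs = u"
    "path_len qs \<le> x" "\<forall>w\<in>internal qs. (u, w) \<in> L \<and> u \<noteq> w"
proof -
  obtain ps where "u \<in> V" "(u, v) \<in> L" "is_path V E ps" "hd ps = u" "last ps = v"
    "path_len ps \<le> x" "\<forall>w\<in>internal ps. (u, w) \<in> L \<and> u \<noteq> w"
    using assms unfolding WReach_def by blast
  then show thesis
    using that[of "rev ps"] is_path_rev is_path_nonempty by (force simp: hd_rev last_rev)
qed

lemma WReachI:
  assumes "(u, v) \<in> L" "is_path V E qs" "hd qs = v" "last qs = u" "path_len qs \<le> x"
    "\<forall>w\<in>internal qs. (u, w) \<in> L \<and> u \<noteq> w"
  shows "u \<in> WReach V E L x v"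
proof -
  have "u \<in> V" using assms(2,4) is_path_set is_path_nonempty last_in_set by blast
  then show ?thesis
    unfolding WReach_def using assms is_path_rev[OF assms(2)] is_path_nonempty[OF assms(2)]
    by (auto intro!: exI[of _ "rev qs"] simp: hd_rev last_rev)
qed

lemma WReach_0: "WReach V E L 0 v \<subseteq> {v}"
proof
  fix u assume "u \<in> WReach V E L 0 v"
  then obtain qs where "is_path V E qs" "hd qs = v" "last qs = u" "path_len qs \<le> 0"
    by (rule WReachE)
  then show "u \<in> {v}"
    using is_path_nonempty by (cases qs) (auto simp: path_len_def)
qed

lemma WReach_isolated:
  assumes "\<forall>y. {y, v} \<notin> E"
  shows "WReach V E L x v \<subseteq> {v}"
proof
  fix u assume "u \<in> WReach V E L x v"
  then obtain qs where p: "is_path V E qs" and hd: "hd qs = v" and last: "last qs = u"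
    by (rule WReachE)
  have ne: "qs \<noteq> []" using is_path_nonempty[OF p] .
  have "\<not> Suc 0 < length qs"
    using is_path_edge[OF p, of 0] assms hd ne by (metis hd_conv_nth insert_commute)
  then show "u \<in> {v}"
    using hd last ne by (cases qs) auto
qed

section \<open>Extending a linear order above an initial segment\<close>

definition prefix_extension :: "'a set \<Rightarrow> ('a \<times> 'a) set \<Rightarrow> ('a \<times> 'a) set \<Rightarrow> bool" where
  "prefix_extension A R L \<longleftrightarrow>
     (\<forall>y\<in>A. \<forall>z\<in>A. (y, z) \<in> L \<longleftrightarrow> (y, z) \<in> R) \<and> (\<forall>y z. (y, z) \<in> L \<longrightarrow> z \<in> A \<longrightarrow> y \<in> A)"

lemma linear_order_on_append:
  assumes R: "linear_order_on A R" and S: "linear_order_on B S" and AB: "A \<inter> B = {}"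
  shows "linear_order_on (A \<union> B) (R \<union> A \<times> B \<union> S)" and "prefix_extension A R (R \<union> A \<times> B \<union> S)"
proof -
  have R': "R \<subseteq> A \<times> A" "refl_on A R" "trans R" "antisym R" "total_on A R"
    using R partial_order_onD[of A R] by (auto simp: linear_order_on_def)
  have S': "S \<subseteq> B \<times> B" "refl_on B S" "trans S" "antisym S" "total_on B S"
    using S partial_order_onD[of B S] by (auto simp: linear_order_on_def)
  have "trans (R \<union> A \<times> B \<union> S)"
    using R'(1,3) S'(1,3) AB unfolding trans_def by blast
  moreover have "antisym (R \<union> A \<times> B \<union> S)"
    using R'(1,4) S'(1,4) AB unfolding antisym_def by blast
  ultimately show "linear_order_on (A \<union> B) (R \<union> A \<times> B \<union> S)"
    using R' S' unfolding order_on_defs refl_on_def total_on_def by blast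
  show "prefix_extension A R (R \<union> A \<times> B \<union> S)"
    using R'(1) S'(1) AB unfolding prefix_extension_def by blast
qed

lemma linear_order_on_rank:
  fixes g :: "'i \<Rightarrow> 'b::linorder"
  assumes h: "inj_on h J" and g: "inj_on g J"
  shows "linear_order_on (h ` J) {(h a, h b) | a b. a \<in> J \<and> b \<in> J \<and> g a \<le> g b}"
    (is "linear_order_on _ ?R")
proof -
  have mem: "(h a, h b) \<in> ?R \<longleftrightarrow> g a \<le> g b" if "a \<in> J" "b \<in> J" for a b
    using that h by (auto dest: inj_onD)
  have "trans ?R"
  proof (rule transI)
    fix x y z assume "(x, y) \<in> ?R" "(y, z) \<in> ?R"
    then obtain a b b' c where "x = h a" "y = h b" "y = h b'" "z = h c" "a \<in> J" "b \<in> J" "b' \<in> J"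
      "c \<in> J" "g a \<le> g b" "g b' \<le> g c"
      by blast
    then show "(x, z) \<in> ?R" using inj_onD[OF h] by (blast intro: order_trans)
  qed
  moreover have "antisym ?R"
  proof (rule antisymI)
    fix x y assume xy: "(x, y) \<in> ?R" and yx: "(y, x) \<in> ?R"
    from xy obtain a b where ab: "x = h a" "y = h b" "a \<in> J" "b \<in> J"
      by blast
    then have "g a = g b" using xy yx mem by (simp add: order_antisym)
    then show "x = y" using ab inj_onD[OF g, of a b] by simp
  qed
  moreover have "total_on (h ` J) ?R" "refl_on (h ` J) ?R"
    unfolding total_on_def refl_on_def using mem by (auto simp: linear)
  ultimately show ?thesis
    unfolding order_on_defs by blast
qed

section \<open>Weak reachability in an induced subgraph\<close>

lemma WReach_induced_suffix:
  assumes pre: "prefix_extension (V - S) L' L"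
    and p: "is_path V E qs" and k: "k < length qs" and sub: "set (drop k qs) \<inter> S = {}"
    and below: "(last qs, qs ! k) \<in> L"
    and int: "\<forall>w\<in>internal qs. (last qs, w) \<in> L \<and> last qs \<noteq> w"
    and len: "path_len qs \<le> x + k"
  shows "last qs \<in> WReach (V - S) {e \<in> E. e \<inter> S = {}} L' x (qs ! k)"
proof -
  define ts where "ts = drop k qs"
  have ts: "is_path V E ts" unfolding ts_def using is_path_drop[OF p k] .
  have ts_sub: "set ts \<subseteq> V - S" using is_path_set[OF ts] sub unfolding ts_def by blast
  have hd: "hd ts = qs ! k" and last: "last ts = last qs"
    unfolding ts_def using k by (simp_all add: hd_drop_conv_nth)
  have ends: "last qs \<in> V - S" "qs ! k \<in> V - S"
    using ts_sub last hd is_path_nonempty[OF ts] by (metis last_in_set hd_in_set subsetD)+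
  show ?thesis
  proof (rule WReachI)
    show "(last qs, qs ! k) \<in> L'" using pre below ends unfolding prefix_extension_def by blast
    show "is_path (V - S) {e \<in> E. e \<inter> S = {}} ts" using is_path_induced[OF ts ts_sub] .
    show "path_len ts \<le> x" using len unfolding ts_def path_len_def by simp
    show "\<forall>w\<in>internal ts. (last qs, w) \<in> L' \<and> last qs \<noteq> w"
      using int internal_drop_subset[of k qs] internal_subset_set[of ts] ts_sub ends pre
      unfolding ts_def prefix_extension_def by blast
  qed (use hd last in auto)
qed

lemma WReach_prefix_extension:
  assumes pre: "prefix_extension (V - S) L' L" and v: "v \<in> V - S"
    and short: "\<And>ps. is_path V E ps \<Longrightarrow> hd ps \<notin> S \<Longrightarrow> last ps \<notin> S \<Longrightarrow> path_len ps \<le> x \<Longrightarrow>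
        set ps \<inter> S = {}"
  shows "WReach V E L x v \<subseteq> WReach (V - S) {e \<in> E. e \<inter> S = {}} L' x v"
proof
  fix u assume "u \<in> WReach V E L x v"
  then obtain qs where u: "(u, v) \<in> L" and p: "is_path V E qs" and hd: "hd qs = v"
    and last: "last qs = u" and len: "path_len qs \<le> x"
    and int: "\<forall>w\<in>internal qs. (u, w) \<in> L \<and> u \<noteq> w"
    by (rule WReachE)
  have ne: "qs \<noteq> []" using is_path_nonempty[OF p] .
  have "u \<notin> S" using pre u v unfolding prefix_extension_def by blast
  then have "set qs \<inter> S = {}" using short[OF p] hd last len v by blast
  then show "u \<in> WReach (V - S) {e \<in> E. e \<inter> S = {}} L' x v"
    using WReach_induced_suffix[OF pre p, of 0 x] u hd last len int ne by (simp add: hd_conv_nth)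
qed

lemma card_WReach_prefix_extension:
  assumes fin: "finite V" and pre: "prefix_extension (V - S) L' L" and v: "v \<in> V - S"
    and short: "\<And>ps. is_path V E ps \<Longrightarrow> hd ps \<notin> S \<Longrightarrow> last ps \<notin> S \<Longrightarrow> path_len ps \<le> x \<Longrightarrow>
        set ps \<inter> S = {}"
    and old: "real (card (WReach (V - S) {e \<in> E. e \<inter> S = {}} L' x v)) \<le> c"
  shows "real (card (WReach V E L x v)) \<le> c"
proof -
  have "card (WReach V E L x v) \<le> card (WReach (V - S) {e \<in> E. e \<inter> S = {}} L' x v)"
    using card_mono[OF finite_WReach WReach_prefix_extension[OF pre v short]] fin by simp
  then have "real (card (WReach V E L x v)) \<le> real (card (WReach (V - S) {e \<in> E. e \<inter> S = {}} L' x v))"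
    by simp
  then show ?thesis using old by linarith
qed

lemma WReach_pendant:
  assumes lin: "linear_order_on V L" and pre: "prefix_extension (V - {v}) L' L"
    and nb: "\<forall>y. {y, v} \<in> E \<longrightarrow> y = w" and w: "w \<in> V - {v}"
  shows "WReach V E L x v \<subseteq> insert v (WReach (V - {v}) {e \<in> E. e \<inter> {v} = {}} L' (x - 1) w)"
proof
  fix u assume "u \<in> WReach V E L x v"
  then obtain qs where p: "is_path V E qs" and hd: "hd qs = v" and last: "last qs = u"
    and len: "path_len qs \<le> x" and int: "\<forall>w\<in>internal qs. (u, w) \<in> L \<and> u \<noteq> w"
    by (rule WReachE)
  have ne: "qs \<noteq> []" using is_path_nonempty[OF p] .
  show "u \<in> insert v (WReach (V - {v}) {e \<in> E. e \<inter> {v} = {}} L' (x - 1) w)"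
  proof (cases "Suc 0 < length qs")
    case False
    then show ?thesis using hd last ne by (cases qs) auto
  next
    case True
    have "{v, qs ! 1} \<in> E" using is_path_edge[OF p, of 0] True hd ne by (simp add: hd_conv_nth)
    then have w1: "qs ! 1 = w" using nb by (metis insert_commute)
    have "set (drop 1 qs) \<inter> {v} = {}"
      using is_path_distinct[OF p] hd ne by (cases qs) auto
    moreover have "(u, w) \<in> L"
    proof (cases "Suc (Suc 0) < length qs")
      case True
      then show ?thesis using int internal_nth[of 1 qs] w1 by auto
    next
      case False
      then have "length qs = 2" using True by simp
      then have "u = w" using last w1 ne by (simp add: last_conv_nth)
      then show ?thesis using lin w partial_order_onD(1)[of V L]
        by (auto simp: linear_order_on_def refl_on_def)
    qed
    ultimately show ?thesis
      using WReach_induced_suffix[OF pre p True, of "x - 1"] w1 last int len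
      by (auto simp: path_len_def)
  qed
qed

section \<open>Ears\<close>

locale ear =
  fixes V :: "'a set" and E :: "'a set set" and W :: "'a list" and m :: nat
  assumes length_W: "length W = Suc m"
    and distinct_W: "distinct W"
    and set_W: "set W \<subseteq> V"
    and neighbours: "\<And>j y. 0 < j \<Longrightarrow> j < m \<Longrightarrow> {y, W ! j} \<in> E \<longleftrightarrow> y = W ! (j - 1) \<or> y = W ! Suc j"
begin

lemma nth_W_eq_iff: "i \<le> m \<Longrightarrow> j \<le> m \<Longrightarrow> W ! i = W ! j \<longleftrightarrow> i = j"
  using distinct_W length_W by (simp add: nth_eq_iff_index_eq)

lemma nth_W_in_V: "j \<le> m \<Longrightarrow> W ! j \<in> V"
  using set_W length_W by (simp add: subset_iff)

lemma internal_W: "internal W = (!) W ` {0<..<m}"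
  using length_W unfolding internal_def by auto

lemma nth_W_in_internal_iff: "j \<le> m \<Longrightarrow> W ! j \<in> internal W \<longleftrightarrow> 0 < j \<and> j < m"
  using nth_W_eq_iff unfolding internal_W by force

lemma ear_rev: "ear V E (rev W) m"
proof
  have rev_nth_W: "rev W ! j = W ! (m - j)" if "j \<le> m" for j
    using that length_W by (simp add: rev_nth)
  show "{y, rev W ! j} \<in> E \<longleftrightarrow> y = rev W ! (j - 1) \<or> y = rev W ! Suc j" if "0 < j" "j < m" for j y
  proof -
    have "m - j - 1 = m - Suc j" "Suc (m - j) = m - (j - 1)" using that by auto
    then show ?thesis using neighbours[of "m - j" y] that by (auto simp: rev_nth_W)
  qed
qed (use length_W distinct_W set_W in auto)

lemma first_step:
  assumes p: "is_path V E qs" and hd: "hd qs = W ! j" and j: "0 < j" "j < m"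
    and len: "Suc 0 < length qs"
  shows "qs ! 1 = W ! (j - 1) \<or> qs ! 1 = W ! Suc j"
proof -
  have "qs ! 0 = W ! j" using hd len by (cases qs) auto
  then have "{qs ! 1, W ! j} \<in> E" using is_path_edge[OF p, of 0] len by (simp add: insert_commute)
  then show ?thesis using neighbours[OF j] by blast
qed

text \<open>Inner vertices have degree 2, so a path that starts down the ear has to stay on it.\<close>
lemma walk_down:
  assumes p: "is_path V E qs" and hd: "hd qs = W ! j" and j: "0 < j" "j < m"
    and len: "Suc 0 < length qs" and down: "qs ! 1 = W ! (j - 1)"
  shows "t < length qs \<Longrightarrow> t \<le> j \<Longrightarrow> qs ! t = W ! (j - t)"
proof (induction t rule: less_induct)
  case (less t)
  consider "t = 0" | "t = 1" | s where "t = Suc (Suc s)"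
    by (metis One_nat_def not0_implies_Suc)
  then show ?case
  proof cases
    case 1
    then show ?thesis using hd len by (cases qs) auto
  next
    case 2
    then show ?thesis using down by simp
  next
    case 3
    have prev: "qs ! s = W ! (j - s)" "qs ! Suc s = W ! (j - Suc s)"
      using less 3 by simp_all
    have "{qs ! t, W ! (j - Suc s)} \<in> E"
      using is_path_edge[OF p, of "Suc s"] less.prems 3 prev by (simp add: insert_commute)
    then have "qs ! t = W ! (j - Suc s - 1) \<or> qs ! t = W ! Suc (j - Suc s)"
      using neighbours[of "j - Suc s"] less.prems 3 j by simp
    moreover have "qs ! t \<noteq> qs ! s"
      using is_path_distinct[OF p] less.prems 3 by (simp add: nth_eq_iff_index_eq)
    moreover have "Suc (j - Suc s) = j - s" using less.prems 3 by simp
    ultimately have "qs ! t = W ! (j - Suc s - 1)" using prev by auto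
    moreover have "j - Suc s - 1 = j - t" using 3 by simp
    ultimately show ?thesis by simp
  qed
qed

lemma walk_up:
  assumes p: "is_path V E qs" and hd: "hd qs = W ! j" and j: "0 < j" "j < m"
    and len: "Suc 0 < length qs" and up: "qs ! 1 = W ! Suc j"
    and t: "t < length qs" "t \<le> m - j"
  shows "qs ! t = W ! (j + t)"
proof -
  interpret rev: ear V E "rev W" m by (rule ear_rev)
  have rev_nth_W: "rev W ! k = W ! (m - k)" if "k \<le> m" for k
    using that length_W by (simp add: rev_nth)
  have "qs ! t = rev W ! (m - j - t)"
    using rev.walk_down[OF p, of "m - j"] hd j len up t by (simp add: rev_nth_W Suc_diff_Suc)
  then show ?thesis using t j by (simp add: rev_nth_W)
qed

lemma walk_exit:
  assumes p: "is_path V E qs" and hd: "hd qs = W ! j" and j: "0 < j" "j < m"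
    and last: "last qs \<notin> internal W"
  shows "qs ! 1 = W ! (j - 1) \<and> j < length qs \<or> qs ! 1 = W ! Suc j \<and> m - j < length qs"
proof -
  have ne: "qs \<noteq> []" using is_path_nonempty[OF p] .
  define n where "n = length qs - 1"
  have last_n: "last qs = qs ! n" using ne unfolding n_def by (simp add: last_conv_nth)
  have "Suc 0 < length qs"
    using hd last ne j nth_W_in_internal_iff[of j] by (cases qs) auto
  from first_step[OF p hd j this] show ?thesis
  proof (elim disjE)
    assume down: "qs ! 1 = W ! (j - 1)"
    have "\<not> n < j"
      using walk_down[OF p hd j \<open>Suc 0 < length qs\<close> down, of n] last last_n
        nth_W_in_internal_iff[of "j - n"] j \<open>Suc 0 < length qs\<close>
      unfolding n_def by auto
    then have "j < length qs" using ne unfolding n_def by (cases qs) auto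
    with down show ?thesis by blast
  next
    assume up: "qs ! 1 = W ! Suc j"
    have "\<not> n < m - j"
      using walk_up[OF p hd j \<open>Suc 0 < length qs\<close> up, of n] last last_n
        nth_W_in_internal_iff[of "j + n"] j \<open>Suc 0 < length qs\<close>
      unfolding n_def by auto
    then have "m - j < length qs" using ne unfolding n_def by (cases qs) auto
    with up show ?thesis by blast
  qed
qed

text \<open>A path with both ends outside that meets an inner vertex runs from it to both ends
  of the ear.\<close>
lemma short_path_avoids_internal:
  assumes p: "is_path V E ps" and ends: "hd ps \<notin> internal W" "last ps \<notin> internal W"
    and len: "path_len ps < m"
  shows "set ps \<inter> internal W = {}"
proof (rule ccontr)
  assume "set ps \<inter> internal W \<noteq> {}"
  then obtain y where "y \<in> set ps" "y \<in> internal W" by blast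
  then obtain k j where k: "k < length ps" and j: "0 < j" "j < m" and kj: "ps ! k = W ! j"
    unfolding internal_W in_set_conv_nth by auto
  have ne: "ps \<noteq> []" using is_path_nonempty[OF p] .
  have inner: "W ! j \<in> internal W" using nth_W_in_internal_iff j by simp
  have "k \<noteq> 0" using ends(1) kj inner ne by (cases k) (auto simp: hd_conv_nth)
  have "k \<noteq> length ps - 1" using ends(2) kj inner ne by (auto simp: last_conv_nth)
  then have "Suc k < length ps" using k by linarith
  define lp where "lp = rev (take (Suc k) ps)"
  define rp where "rp = drop k ps"
  have lp: "is_path V E lp" "hd lp = W ! j" "last lp \<notin> internal W" "length lp = Suc k"
    using is_path_rev[OF is_path_take[OF p], of "Suc k"] k kj ends(1) ne \<open>k \<noteq> 0\<close>
    unfolding lp_def by (simp_all add: hd_rev last_rev hd_conv_nth take_Suc_conv_app_nth)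
  have rp: "is_path V E rp" "hd rp = W ! j" "last rp \<notin> internal W" "length rp = length ps - k"
    using is_path_drop[OF p k] k kj ends(2) unfolding rp_def by (auto simp: hd_drop_conv_nth)
  have "lp ! 1 \<noteq> rp ! 1"
    using is_path_distinct[OF p] \<open>k \<noteq> 0\<close> \<open>Suc k < length ps\<close>
    unfolding lp_def rp_def by (simp add: rev_nth nth_eq_iff_index_eq)
  then have "m < length lp + length rp - 1"
    using walk_exit[OF lp(1,2) j lp(3)] walk_exit[OF rp(1,2) j rp(3)] by auto
  then show False using len lp(4) rp(4) k unfolding path_len_def by linarith
qed

lemma descending_witness:
  assumes lin: "linear_order_on V L" and pre: "prefix_extension (V - internal W) L' L"
    and p: "is_path V E qs" and hd: "hd qs = W ! i" and i: "0 < i" "i < m"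
    and len1: "Suc 0 < length qs" and down: "qs ! 1 = W ! (i - 1)"
    and len: "path_len qs \<le> x" and x: "x < m"
    and int: "\<forall>w\<in>internal qs. (last qs, w) \<in> L \<and> last qs \<noteq> w"
  shows "last qs \<in> (!) W ` {j. 0 < j \<and> j \<le> i \<and> i \<le> j + x}
     \<union> (if i \<le> x then WReach (V - internal W) {e \<in> E. e \<inter> internal W = {}} L' (x - i) (W ! 0) else {})"
proof -
  define n where "n = path_len qs"
  have n: "n \<le> x" "n < length qs" "last qs = qs ! n"
    using len len1 is_path_nonempty[OF p] unfolding n_def path_len_def by (auto simp: last_conv_nth)
  show ?thesis
  proof (cases "n < i")
    case True
    then have "last qs = W ! (i - n)" using walk_down[OF p hd i len1 down, of n] n by simp
    then show ?thesis using True n by (auto intro!: image_eqI[of _ _ "i - n"])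
  next
    case False
    have W0: "qs ! i = W ! 0" using walk_down[OF p hd i len1 down, of i] False n by simp
    have W0_out: "W ! 0 \<in> V - internal W" using nth_W_in_V nth_W_in_internal_iff by simp
    have below_W0: "(last qs, W ! 0) \<in> L"
    proof (cases "n = i")
      case True
      then show ?thesis using W0 W0_out n lin partial_order_onD(1)[of V L]
        by (simp add: linear_order_on_def refl_on_def)
    next
      case False
      then show ?thesis using int internal_nth[of i qs] W0 n i \<open>\<not> n < i\<close> by simp
    qed
    then have "last qs \<in> V - internal W"
      using pre W0_out unfolding prefix_extension_def by blast
    then have "set (drop i qs) \<inter> internal W = {}"
      using short_path_avoids_internal[OF is_path_drop[OF p]] W0 W0_out n False len x
      by (simp add: hd_drop_conv_nth path_len_def)
    then have "last qs \<in> WReach (V - internal W) {e \<in> E. e \<inter> internal W = {}} L' (x - i) (qs ! i)"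
      using WReach_induced_suffix[OF pre p, of i "x - i"] below_W0 W0 int len n False
      by (simp add: n_def)
    then show ?thesis using W0 n False by auto
  qed
qed

text \<open>Climbing the ear from \<open>W\<^sub>i\<close> only passes vertices above the end point until \<open>W\<^sub>p\<close>,
  which is below all of them.\<close>
lemma ascending_witness:
  assumes lin: "linear_order_on V L"
    and least: "\<And>j. 0 < j \<Longrightarrow> j < m \<Longrightarrow> (W ! p, W ! j) \<in> L"
    and incr: "\<And>i j. 0 < i \<Longrightarrow> i < j \<Longrightarrow> j < p \<Longrightarrow> (W ! i, W ! j) \<in> L"
    and p: "is_path V E qs" and hd: "hd qs = W ! i" and i: "0 < i" "i \<le> p"
    and len1: "Suc 0 < length qs" and up: "qs ! 1 = W ! Suc i" and len: "p + path_len qs < m"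
    and below: "(last qs, W ! i) \<in> L" and int: "\<forall>w\<in>internal qs. (last qs, w) \<in> L"
  shows "i + path_len qs = p \<and> last qs = W ! p"
proof -
  define n where "n = path_len qs"
  have n: "0 < n" "last qs = qs ! n"
    using len1 is_path_nonempty[OF p] unfolding n_def path_len_def by (auto simp: last_conv_nth)
  have pn: "p + n < m" using len unfolding n_def .
  have im: "i < m" using i pn by linarith
  have u: "last qs = W ! (i + n)" using walk_up[OF p hd i(1) im len1 up, of n] n pn i
    unfolding n_def path_len_def by simp
  have anti: "antisym L" using lin by (simp add: linear_order_on_def partial_order_on_def)
  have "i + n = p"
  proof (rule ccontr)
    assume "i + n \<noteq> p"
    then consider "i + n < p" | "p < i + n" by linarith
    then show False
    proof cases
      case 1
      then have "(W ! i, last qs) \<in> L" using incr[of i "i + n"] u i n by simp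
      then have "last qs = W ! i" using below anti by (auto dest: antisymD)
      then show False using u nth_W_eq_iff[of "i + n" i] n 1 i pn by simp
    next
      case 2
      have "(last qs, W ! p) \<in> L"
      proof (cases "i = p")
        case False
        have "qs ! (p - i) = W ! p"
          using walk_up[OF p hd i(1) im len1 up, of "p - i"] 2 i pn unfolding n_def path_len_def by simp
        then show ?thesis using int internal_nth[of "p - i" qs] 2 i False unfolding n_def path_len_def
          by simp
      qed (use below in simp)
      moreover have "(W ! p, last qs) \<in> L" using least[of "i + n"] u i pn by simp
      ultimately have "last qs = W ! p" using anti by (auto dest: antisymD)
      then show False using u nth_W_eq_iff[of "i + n" p] 2 pn i by simp
    qed
  qed
  then show ?thesis using u unfolding n_def by simp
qed

lemma WReach_internal_vertex:
  assumes lin: "linear_order_on V L" and pre: "prefix_extension (V - internal W) L' L"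
    and least: "\<And>j. 0 < j \<Longrightarrow> j < m \<Longrightarrow> (W ! p, W ! j) \<in> L"
    and incr: "\<And>i j. 0 < i \<Longrightarrow> i < j \<Longrightarrow> j < p \<Longrightarrow> (W ! i, W ! j) \<in> L"
    and x: "p + x < m" and i: "0 < i" "i \<le> p"
  shows "WReach V E L x (W ! i) \<subseteq> (!) W ` {j. 0 < j \<and> j \<le> i \<and> i \<le> j + x}
     \<union> (if i \<le> x then WReach (V - internal W) {e \<in> E. e \<inter> internal W = {}} L' (x - i) (W ! 0) else {})
     \<union> (if i < p \<and> p \<le> i + x then {W ! p} else {})"
proof
  fix u assume "u \<in> WReach V E L x (W ! i)"
  then obtain qs where below: "(u, W ! i) \<in> L" and p: "is_path V E qs" and hd: "hd qs = W ! i"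
    and last: "last qs = u" and len: "path_len qs \<le> x"
    and int: "\<forall>w\<in>internal qs. (u, w) \<in> L \<and> u \<noteq> w"
    by (rule WReachE)
  have im: "i < m" using x i by linarith
  show "u \<in> (!) W ` {j. 0 < j \<and> j \<le> i \<and> i \<le> j + x}
     \<union> (if i \<le> x then WReach (V - internal W) {e \<in> E. e \<inter> internal W = {}} L' (x - i) (W ! 0) else {})
     \<union> (if i < p \<and> p \<le> i + x then {W ! p} else {})"
  proof (cases "Suc 0 < length qs")
    case False
    then show ?thesis using hd last i is_path_nonempty[OF p] by (cases qs) auto
  next
    case True
    from first_step[OF p hd i(1) im True] show ?thesis
    proof (elim disjE)
      assume "qs ! 1 = W ! (i - 1)"
      then show ?thesis
        using descending_witness[OF lin pre p hd i(1) im True _ len] int last x by auto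
    next
      assume "qs ! 1 = W ! Suc i"
      then have "i + path_len qs = p \<and> u = W ! p"
        using ascending_witness[OF lin least incr p hd i True] below int last len x by auto
      moreover have "0 < path_len qs" using True by (simp add: path_len_def)
      ultimately show ?thesis using len by auto
    qed
  qed
qed

end

text \<open>What reversing a reduction costs: \<open>W\<^sub>i\<close> with \<open>i \<le> x\<close> on a long ear weakly reaches
  at most \<open>i\<close> ear vertices towards \<open>W\<^sub>0\<close>, \<open>f (x - i)\<close> vertices beyond \<open>W\<^sub>0\<close>, and
  \<open>W\<^sub>q\<close> only if \<open>q \<le> x + i\<close>; for \<open>i > x\<close> this is at most \<open>x + 2\<close>.
  The case \<open>i = 1\<close> also covers pendant vertices.\<close>
definition wreach_budget :: "nat \<Rightarrow> nat \<Rightarrow> (nat \<Rightarrow> real) \<Rightarrow> bool" where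
  "wreach_budget q r f \<longleftrightarrow> 1 \<le> f 0 \<and> (\<forall>x. 1 \<le> x \<longrightarrow> x \<le> r \<longrightarrow> real x + 2 \<le> f x) \<and>
     (\<forall>i x. 1 \<le> i \<longrightarrow> i \<le> x \<longrightarrow> x \<le> r \<longrightarrow> real i + f (x - i) + (if q \<le> x + i then 1 else 0) \<le> f x)"

lemma wreach_budgetD:
  assumes "wreach_budget q r f"
  shows wreach_budget_0: "1 \<le> f 0"
    and wreach_budget_ge: "1 \<le> x \<Longrightarrow> x \<le> r \<Longrightarrow> real x + 2 \<le> f x"
    and wreach_budget_ear: "1 \<le> i \<Longrightarrow> i \<le> x \<Longrightarrow> x \<le> r \<Longrightarrow>
      real i + f (x - i) + (if q \<le> x + i then 1 else 0) \<le> f x"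
    and wreach_budget_pendant: "1 \<le> x \<Longrightarrow> x \<le> r \<Longrightarrow> 1 + f (x - 1) \<le> f x"
proof -
  show "1 \<le> f 0" using assms unfolding wreach_budget_def by simp
  show "1 \<le> x \<Longrightarrow> x \<le> r \<Longrightarrow> real x + 2 \<le> f x" using assms unfolding wreach_budget_def by simp
  show ear: "1 \<le> i \<Longrightarrow> i \<le> x \<Longrightarrow> x \<le> r \<Longrightarrow>
      real i + f (x - i) + (if q \<le> x + i then 1 else 0) \<le> f x" for i
    using assms unfolding wreach_budget_def by blast
  show "1 \<le> x \<Longrightarrow> x \<le> r \<Longrightarrow> 1 + f (x - 1) \<le> f x"
    using ear[of 1] by (simp split: if_splits)
qed

text \<open>The inner vertices of an ear \<open>W\<^sub>0 \<dots> W\<^sub>m\<close> are ordered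
  \<open>W\<^sub>q, W\<^sub>1, W\<^sub>m\<^sub>-\<^sub>1, W\<^sub>2, W\<^sub>m\<^sub>-\<^sub>2, \<dots>\<close>.\<close>
definition ear_rank :: "nat \<Rightarrow> nat \<Rightarrow> nat \<Rightarrow> nat" where
  "ear_rank m q j = (if j = q then 0 else if j < q then 2 * j else 2 * (m - j) + 1)"

definition ear_order :: "'a list \<Rightarrow> nat \<Rightarrow> nat \<Rightarrow> ('a \<times> 'a) set" where
  "ear_order W m q =
     {(W ! a, W ! b) | a b. a \<in> {0<..<m} \<and> b \<in> {0<..<m} \<and> ear_rank m q a \<le> ear_rank m q b}"

lemma inj_on_ear_rank: "inj_on (ear_rank m q) {0<..<m}"
  unfolding ear_rank_def inj_on_def by (auto split: if_splits) presburger+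

context ear
begin

lemma card_WReach_internal_vertex:
  assumes lin: "linear_order_on V L" and pre: "prefix_extension (V - internal W) L' L"
    and least: "\<And>j. 0 < j \<Longrightarrow> j < m \<Longrightarrow> (W ! p, W ! j) \<in> L"
    and incr: "\<And>i j. 0 < i \<Longrightarrow> i < j \<Longrightarrow> j < p \<Longrightarrow> (W ! i, W ! j) \<in> L"
    and fin: "finite V"
    and old: "\<And>y v. y \<le> r \<Longrightarrow> v \<in> V - internal W \<Longrightarrow>
      real (card (WReach (V - internal W) {e \<in> E. e \<inter> internal W = {}} L' y v)) \<le> f y"
    and budget: "wreach_budget q r f" and pq: "q \<le> p" "p + r < m"
    and x: "x \<le> r" and i: "0 < i" "i \<le> p"
  shows "real (card (WReach V E L x (W ! i))) \<le> f x"
proof -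
  define S1 where "S1 = (!) W ` {j. 0 < j \<and> j \<le> i \<and> i \<le> j + x}"
  define S2 where
    "S2 = (if i \<le> x then WReach (V - internal W) {e \<in> E. e \<inter> internal W = {}} L' (x - i) (W ! 0) else {})"
  define S3 where "S3 = (if i < p \<and> p \<le> i + x then {W ! p} else {})"
  have sub: "WReach V E L x (W ! i) \<subseteq> S1 \<union> S2 \<union> S3"
    unfolding S1_def S2_def S3_def
    by (rule WReach_internal_vertex[OF lin pre least incr _ i]) (use pq x in auto)
  have fin2: "finite S2"
    using finite_WReach[of "V - internal W"] fin unfolding S2_def by auto
  have "card (WReach V E L x (W ! i)) \<le> card (S1 \<union> S2 \<union> S3)"
    by (rule card_mono[OF _ sub]) (use fin2 in \<open>simp add: S1_def S3_def\<close>)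
  also have "\<dots> \<le> card S1 + card S2 + card S3"
    using card_Un_le[of S1 S2] card_Un_le[of "S1 \<union> S2" S3] by linarith
  finally have total: "card (WReach V E L x (W ! i)) \<le> card S1 + card S2 + card S3" .
  have "card S1 \<le> card {j. 0 < j \<and> j \<le> i \<and> i \<le> j + x}"
    unfolding S1_def by (rule card_image_le) simp
  moreover have "card {j. 0 < j \<and> j \<le> i \<and> i \<le> j + x} \<le> card {1..i}"
    "card {j. 0 < j \<and> j \<le> i \<and> i \<le> j + x} \<le> card {i - x..i}"
    by (rule card_mono; auto)+
  ultimately have S1: "card S1 \<le> i" "card S1 \<le> x + 1"
    by simp_all
  have S3: "card S3 \<le> (if q \<le> x + i then 1 else 0)"
    using pq unfolding S3_def by auto
  show ?thesis
  proof (cases "i \<le> x")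
    case True
    have "real (card S2) \<le> f (x - i)"
      using old[of "x - i" "W ! 0"] True x nth_W_in_V nth_W_in_internal_iff unfolding S2_def by simp
    then have "real (card (WReach V E L x (W ! i))) \<le> real i + f (x - i) + (if q \<le> x + i then 1 else 0)"
      using total S1(1) S3 by (simp split: if_splits)
    also have "\<dots> \<le> f x" using wreach_budget_ear[OF budget] True x i by simp
    finally show ?thesis .
  next
    case False
    then have "card S2 = 0" unfolding S2_def by simp
    show ?thesis
    proof (cases "x = 0")
      case True
      then have "card S3 = 0" using False unfolding S3_def by simp
      then have "card (WReach V E L x (W ! i)) \<le> 1" using total S1(2) \<open>card S2 = 0\<close> True by simp
      then have "real (card (WReach V E L x (W ! i))) \<le> 1" by simp
      then show ?thesis using wreach_budget_0[OF budget] True by simp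
    next
      case False
      have "card S3 \<le> 1" unfolding S3_def by simp
      then have "real (card (WReach V E L x (W ! i))) \<le> real x + 2"
        using total S1(2) \<open>card S2 = 0\<close> by simp
      then show ?thesis using wreach_budget_ge[OF budget, of x] False x by simp
    qed
  qed
qed

lemma linear_order_on_ear_order: "linear_order_on (internal W) (ear_order W m q)"
proof -
  have "inj_on ((!) W) {0<..<m}" using nth_W_eq_iff by (auto intro: inj_onI)
  then show ?thesis
    unfolding internal_W ear_order_def by (rule linear_order_on_rank[OF _ inj_on_ear_rank])
qed

lemma ear_order_iff:
  assumes "0 < a" "a < m" "0 < b" "b < m"
  shows "(W ! a, W ! b) \<in> ear_order W m q \<longleftrightarrow> ear_rank m q a \<le> ear_rank m q b"
proof
  assume "(W ! a, W ! b) \<in> ear_order W m q"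
  then obtain a' b' where "W ! a = W ! a'" "W ! b = W ! b'" "a' \<in> {0<..<m}" "b' \<in> {0<..<m}"
    "ear_rank m q a' \<le> ear_rank m q b'"
    unfolding ear_order_def by blast
  then show "ear_rank m q a \<le> ear_rank m q b" using assms nth_W_eq_iff[of a a'] nth_W_eq_iff[of b b'] by simp
qed (use assms in \<open>auto simp: ear_order_def\<close>)

lemma card_WReach_ear_order:
  assumes lin: "linear_order_on V L" and pre: "prefix_extension (V - internal W) L' L"
    and rank: "\<And>a b. 0 < a \<Longrightarrow> a < m \<Longrightarrow> 0 < b \<Longrightarrow> b < m \<Longrightarrow>
      (W ! a, W ! b) \<in> L \<longleftrightarrow> ear_rank m q a \<le> ear_rank m q b"
    and fin: "finite V"
    and old: "\<And>y v. y \<le> r \<Longrightarrow> v \<in> V - internal W \<Longrightarrow>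
      real (card (WReach (V - internal W) {e \<in> E. e \<inter> internal W = {}} L' y v)) \<le> f y"
    and budget: "wreach_budget q r f" and long: "2 * q \<le> m" and rq: "r < q"
    and x: "x \<le> r" and i: "0 < i" "i < m"
  shows "real (card (WReach V E L x (W ! i))) \<le> f x"
proof -
  interpret rev: ear V E "rev W" m by (rule ear_rev)
  have rev_nth_W: "rev W ! k = W ! (m - k)" if "k \<le> m" for k
    using that length_W by (simp add: rev_nth)
  have qm: "q < m" "r + q < m" using long rq by linarith+
  show ?thesis
  proof (cases "i \<le> q")
    case True
    show ?thesis
    proof (rule card_WReach_internal_vertex[OF lin pre _ _ fin old budget _ _ x i(1) True])
      show "(W ! q, W ! j) \<in> L" if "0 < j" "j < m" for j
        using rank[of q j] that qm i True by (simp add: ear_rank_def)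
      show "(W ! a, W ! b) \<in> L" if "0 < a" "a < b" "b < q" for a b
        using rank[of a b] that qm by (simp add: ear_rank_def)
      show "q + r < m" using qm by simp
    qed simp_all
  next
    case False
    have u: "W ! i = rev W ! (m - i)" using i rev_nth_W by simp
    show ?thesis unfolding u
    proof (rule rev.card_WReach_internal_vertex[OF lin _ _ _ fin _ budget, of L' "m - q"])
      show "prefix_extension (V - internal (rev W)) L' L" using pre by simp
      show "(rev W ! (m - q), rev W ! j) \<in> L" if "0 < j" "j < m" for j
        using rank[of q "m - j"] that qm rq rev_nth_W by (simp add: ear_rank_def)
      show "(rev W ! a, rev W ! b) \<in> L" if "0 < a" "a < b" "b < m - q" for a b
        using rank[of "m - a" "m - b"] that qm rq rev_nth_W by (simp add: ear_rank_def)
      show "real (card (WReach (V - internal (rev W)) {e \<in> E. e \<inter> internal (rev W) = {}} L' y v))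
          \<le> f y" if "y \<le> r" "v \<in> V - internal (rev W)" for y v
        using old that by simp
      show "q \<le> m - q" using long by linarith
      show "m - q + r < m" using qm rq by linarith
      show "0 < m - i" "m - i \<le> m - q" using i False by simp_all
      show "x \<le> r" by (fact x)
    qed
  qed
qed

end

lemma graph_delete:
  assumes g: "graph V E" shows "graph (V - S) {e \<in> E. e \<inter> S = {}}"
proof -
  have edges: "\<forall>e\<in>E. \<exists>u v. e = {u, v} \<and> u \<noteq> v \<and> u \<in> V \<and> v \<in> V" and fin: "finite V"
    using g unfolding graph_def by simp_all
  have "\<exists>u v. e = {u, v} \<and> u \<noteq> v \<and> u \<in> V - S \<and> v \<in> V - S"
    if e: "e \<in> E" "e \<inter> S = {}" for e
  proof -
    obtain u v where uv: "e = {u, v}" "u \<noteq> v" "u \<in> V" "v \<in> V" using edges e(1) by blast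
    then have "u \<notin> S" "v \<notin> S" using e(2) by auto
    then show ?thesis using uv by (intro exI[of _ u] exI[of _ v]) simp
  qed
  then show ?thesis unfolding graph_def using fin by simp
qed

lemma graph_neighbour:
  assumes "graph V E" "{u, v} \<in> E" shows "u \<in> V \<and> u \<noteq> v"
proof -
  obtain a b where "{u, v} = {a, b}" "a \<noteq> b" "a \<in> V" "b \<in> V"
    using assms unfolding graph_def by blast
  then show ?thesis by (auto simp: doubleton_eq_iff)
qed

lemma finite_neighbours: "graph V E \<Longrightarrow> finite {u. {u, v} \<in> E}"
proof -
  assume g: "graph V E"
  have "{u. {u, v} \<in> E} \<subseteq> V" using graph_neighbour[OF g] by blast
  moreover have "finite V" using g unfolding graph_def by simp
  ultimately show ?thesis by (rule finite_subset)
qed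

lemma degree_le_1_neighbour:
  assumes g: "graph V E" and deg: "degree E v \<le> 1"
  obtains w where "\<forall>y. {y, v} \<in> E \<longrightarrow> y = w"
proof -
  define N where "N = {u. {u, v} \<in> E}"
  have "card N \<le> Suc 0" using deg unfolding degree_def N_def by simp
  then have unique: "\<forall>a\<in>N. \<forall>b\<in>N. a = b"
    using card_le_Suc0_iff_eq[OF finite_neighbours[OF g, of v]] unfolding N_def by blast
  show thesis
  proof (cases "N = {}")
    case False
    then obtain w where "w \<in> N" by blast
    then show thesis using that[of w] unique unfolding N_def by blast
  qed (use that[of v] in \<open>auto simp: N_def\<close>)
qed

lemma ear_of_strict_ear:
  assumes g: "graph V E" and ear: "strict_ear V E ps"
  shows "ear V E ps (path_len ps)"
proof
  have p: "is_path V E ps" using ear unfolding strict_ear_def by simp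
  show len: "length ps = Suc (path_len ps)"
    using is_path_nonempty[OF p] unfolding path_len_def by simp
  show "distinct ps" "set ps \<subseteq> V" using p by (simp_all add: is_path_distinct is_path_set)
  show "{y, ps ! j} \<in> E \<longleftrightarrow> y = ps ! (j - 1) \<or> y = ps ! Suc j"
    if j: "0 < j" "j < path_len ps" for j y
  proof -
    define N where "N = {u. {u, ps ! j} \<in> E}"
    have "ps ! j \<in> internal ps" using internal_nth[of j ps] j len by simp
    then have "card N = 2" using ear unfolding strict_ear_def degree_def N_def by blast
    have "{ps ! (j - 1), ps ! Suc (j - 1)} \<in> E" "{ps ! j, ps ! Suc j} \<in> E"
      using is_path_edge[OF p, of "j - 1"] is_path_edge[OF p, of j] j len by simp_all
    then have sub: "{ps ! (j - 1), ps ! Suc j} \<subseteq> N"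
      using j unfolding N_def by (simp add: insert_commute)
    have "ps ! (j - 1) \<noteq> ps ! Suc j"
      using is_path_distinct[OF p] j len by (simp add: nth_eq_iff_index_eq)
    then have "card {ps ! (j - 1), ps ! Suc j} = card N" using \<open>card N = 2\<close> by simp
    then have "{ps ! (j - 1), ps ! Suc j} = N"
      using card_subset_eq[OF finite_neighbours[OF g, of "ps ! j", folded N_def] sub] by simp
    then show ?thesis unfolding N_def by blast
  qed
qed

section \<open>Reversing a reduction\<close>

lemma card_WReach_low_degree_vertex:
  assumes g: "graph V E" and lin: "linear_order_on V L" and pre: "prefix_extension (V - {v}) L' L"
    and nb: "\<forall>y. {y, v} \<in> E \<longrightarrow> y = w"
    and old: "\<And>y u. y \<le> r \<Longrightarrow> u \<in> V - {v} \<Longrightarrow>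
      real (card (WReach (V - {v}) {e \<in> E. e \<inter> {v} = {}} L' y u)) \<le> f y"
    and budget: "wreach_budget q r f" and x: "x \<le> r"
  shows "real (card (WReach V E L x v)) \<le> f x"
proof -
  have fin: "finite (V - {v})" using g unfolding graph_def by simp
  consider "x = 0" | "x \<noteq> 0" "\<forall>y. {y, v} \<notin> E" | "x \<noteq> 0" "{w, v} \<in> E" using nb by blast
  then show ?thesis
  proof cases
    case 1
    then show ?thesis using card_mono[OF _ WReach_0, of v V E L] wreach_budget_0[OF budget] by simp
  next
    case 2
    then have "card (WReach V E L x v) \<le> 1"
      using card_mono[OF _ WReach_isolated, of v] by fastforce
    then show ?thesis using wreach_budget_ge[OF budget, of x] x 2 by simp
  next
    case 3
    then have w: "w \<in> V - {v}" using graph_neighbour[OF g] by blast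
    have "card (WReach V E L x v) \<le> card (insert v (WReach (V - {v}) {e \<in> E. e \<inter> {v} = {}} L' (x - 1) w))"
      using card_mono[OF _ WReach_pendant[OF lin pre nb w]] finite_WReach[OF fin] by simp
    also have "\<dots> \<le> 1 + card (WReach (V - {v}) {e \<in> E. e \<inter> {v} = {}} L' (x - 1) w)"
      using finite_WReach[OF fin] by (simp add: card_insert_if)
    finally have "real (card (WReach V E L x v)) \<le>
        1 + real (card (WReach (V - {v}) {e \<in> E. e \<inter> {v} = {}} L' (x - 1) w))"
      by simp
    also have "\<dots> \<le> 1 + f (x - 1)" using old[of "x - 1" w] x w by simp
    also have "\<dots> \<le> f x" using wreach_budget_pendant[OF budget, of x] x 3 by simp
    finally show ?thesis .
  qed
qed

lemma good_linear_order_add_vertex: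
  assumes g: "graph V E" and v: "v \<in> V" and deg: "degree E v \<le> 1"
    and good: "good_linear_order (V - {v}) {e \<in> E. e \<inter> {v} = {}} L' f r"
    and budget: "wreach_budget q r f"
  shows "\<exists>L. good_linear_order V E L f r"
proof -
  define L where "L = L' \<union> (V - {v}) \<times> {v} \<union> {(v, v)}"
  have lin': "linear_order_on (V - {v}) L'" using good unfolding good_linear_order_def by simp
  have old: "real (card (WReach (V - {v}) {e \<in> E. e \<inter> {v} = {}} L' x u)) \<le> f x"
    if "x \<le> r" "u \<in> V - {v}" for x u
    using good that unfolding good_linear_order_def by blast
  have V: "V - {v} \<union> {v} = V" using v by blast
  have lin: "linear_order_on V L" and pre: "prefix_extension (V - {v}) L' L"
    using linear_order_on_append[OF lin' linear_order_on_singleton[of v]] unfolding L_def V by simp_all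
  obtain w where nb: "\<forall>y. {y, v} \<in> E \<longrightarrow> y = w" using degree_le_1_neighbour[OF g deg] .
  have fin: "finite V" using g unfolding graph_def by simp
  have "real (card (WReach V E L x u)) \<le> f x" if x: "x \<le> r" and u: "u \<in> V" for x u
  proof (cases "u = v")
    case False
    show ?thesis
    proof (rule card_WReach_prefix_extension[OF fin pre])
      show "u \<in> V - {v}" using u False by simp
      show "set ps \<inter> {v} = {}" if "is_path V E ps" "hd ps \<notin> {v}" "last ps \<notin> {v}" for ps
        using is_path_avoids_pendant[OF that(1) nb] that(2,3) by simp
      show "real (card (WReach (V - {v}) {e \<in> E. e \<inter> {v} = {}} L' x u)) \<le> f x"
        using old x u False by simp
    qed
  next
    case True
    then show ?thesis using card_WReach_low_degree_vertex[OF g lin pre nb old budget x] by simp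
  qed
  then show ?thesis using lin unfolding good_linear_order_def by blast
qed

lemma good_linear_order_add_ear:
  assumes g: "graph V E" and ear: "strict_ear V E ps" and long: "2 * q \<le> path_len ps" and rq: "r < q"
    and good: "good_linear_order (V - internal ps) {e \<in> E. e \<inter> internal ps = {}} L' f r"
    and budget: "wreach_budget q r f"
  shows "\<exists>L. good_linear_order V E L f r"
proof -
  define m where "m = path_len ps"
  interpret ear V E ps m unfolding m_def using ear_of_strict_ear[OF g ear] .
  have lin': "linear_order_on (V - internal ps) L'" using good unfolding good_linear_order_def by simp
  have L'_sub: "L' \<subseteq> (V - internal ps) \<times> (V - internal ps)"
    using partial_order_onD(4) lin' unfolding linear_order_on_def by blast
  have old: "real (card (WReach (V - internal ps) {e \<in> E. e \<inter> internal ps = {}} L' x u)) \<le> f x"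
    if "x \<le> r" "u \<in> V - internal ps" for x u
    using good that unfolding good_linear_order_def by blast
  have fin: "finite V" using g unfolding graph_def by simp
  have V: "V - internal ps \<union> internal ps = V"
    using internal_subset_set[of ps] set_W by blast
  define L where "L = L' \<union> (V - internal ps) \<times> internal ps \<union> ear_order ps m q"
  have lin: "linear_order_on V L" and pre: "prefix_extension (V - internal ps) L' L"
    using linear_order_on_append[OF lin' linear_order_on_ear_order, of q] unfolding L_def V by auto
  have rank: "(ps ! a, ps ! b) \<in> L \<longleftrightarrow> ear_rank m q a \<le> ear_rank m q b"
    if "0 < a" "a < m" "0 < b" "b < m" for a b
  proof -
    have "ps ! a \<in> internal ps" using nth_W_in_internal_iff that by simp
    then have "(ps ! a, ps ! b) \<in> L \<longleftrightarrow> (ps ! a, ps ! b) \<in> ear_order ps m q"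
      using L'_sub unfolding L_def by blast
    then show ?thesis using ear_order_iff[OF that] by simp
  qed
  have "real (card (WReach V E L x u)) \<le> f x" if x: "x \<le> r" and u: "u \<in> V" for x u
  proof (cases "u \<in> internal ps")
    case False
    show ?thesis
    proof (rule card_WReach_prefix_extension[OF fin pre])
      show "u \<in> V - internal ps" using u False by simp
      show "set ps' \<inter> internal ps = {}"
        if "is_path V E ps'" "hd ps' \<notin> internal ps" "last ps' \<notin> internal ps" "path_len ps' \<le> x"
        for ps'
        using short_path_avoids_internal[OF that(1-3)] that(4) x rq long unfolding m_def by linarith
      show "real (card (WReach (V - internal ps) {e \<in> E. e \<inter> internal ps = {}} L' x u)) \<le> f x"
        using old x u False by simp
    qed
  next
    case True
    then obtain i where "0 < i" "i < m" "u = ps ! i" unfolding internal_W by auto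
    then show ?thesis
      using card_WReach_ear_order[OF lin pre rank fin old budget _ rq x] long unfolding m_def by simp
  qed
  then show ?thesis using lin unfolding good_linear_order_def by blast
qed

lemma path_degenerate_good_linear_order:
  assumes "path_degenerate (2 * q) V E" and "graph V E" and "r < q" and "wreach_budget q r f"
  shows "\<exists>L. good_linear_order V E L f r"
  using assms(1,2)
proof (induction rule: path_degenerate.induct)
  case empty
  show ?case unfolding good_linear_order_def by (intro exI[of _ "{}"]) simp
next
  case (step V E V' E')
  from step.hyps(1) show ?case
    unfolding p_reduction_def delete_vertices_def
  proof (elim disjE bexE exE conjE)
    fix v assume v: "v \<in> V" "degree E v = 0" and VE: "(V', E') = (V - {v}, {e \<in> E. e \<inter> {v} = {}})"
    then obtain L' where "good_linear_order (V - {v}) {e \<in> E. e \<inter> {v} = {}} L' f r"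
      using step.IH graph_delete[OF step.prems, of "{v}"] by blast
    then show ?thesis using good_linear_order_add_vertex[OF step.prems v(1) _ _ assms(4)] v(2) by simp
  next
    fix v assume v: "v \<in> V" "degree E v = 1" and VE: "(V', E') = (V - {v}, {e \<in> E. e \<inter> {v} = {}})"
    then obtain L' where "good_linear_order (V - {v}) {e \<in> E. e \<inter> {v} = {}} L' f r"
      using step.IH graph_delete[OF step.prems, of "{v}"] by blast
    then show ?thesis using good_linear_order_add_vertex[OF step.prems v(1) _ _ assms(4)] v(2) by simp
  next
    fix ps assume ps: "strict_ear V E ps" "2 * q \<le> path_len ps"
      and VE: "(V', E') = (V - internal ps, {e \<in> E. e \<inter> internal ps = {}})"
    then obtain L' where "good_linear_order (V - internal ps) {e \<in> E. e \<inter> internal ps = {}} L' f r"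
      using step.IH graph_delete[OF step.prems, of "internal ps"] by blast
    then show ?thesis using good_linear_order_add_ear[OF step.prems ps(1,2) assms(3) _ assms(4)] by simp
  qed
qed


section \<open>The bound\<close>

lemma log_ratio_nonneg:
  fixes q y :: nat assumes "1 \<le> y" "y < q"
  shows "0 \<le> log 2 ((real q - 1) / (real q - real y))"
  using assms by (simp add: field_simps)

lemma log_ratio_mono:
  fixes q a b :: nat assumes "1 \<le> a" "a \<le> b" "b < q"
  shows "log 2 ((real q - 1) / (real q - real a)) \<le> log 2 ((real q - 1) / (real q - real b))"
proof -
  have "(real q - 1) / (real q - real a) \<le> (real q - 1) / (real q - real b)"
    using assms by (intro divide_left_mono) auto
  then show ?thesis using assms by simp
qed

lemma log_ratio_double:
  fixes q y b :: nat assumes "1 \<le> y" "y \<le> b" "b < q" "q + y \<le> 2 * b"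
  shows "1 + log 2 ((real q - 1) / (real q - real y)) \<le> log 2 ((real q - 1) / (real q - real b))"
proof -
  define A where "A = (real q - 1) / (real q - real y)"
  define B where "B = (real q - 1) / (real q - real b)"
  have A: "0 < A" using assms unfolding A_def by simp
  have "real (q + y) \<le> real (2 * b)" using assms(4) by (simp only: of_nat_le_iff)
  then have "2 * (real q - real b) \<le> real q - real y" by simp
  then have "(real q - 1) * (2 * (real q - real b)) \<le> (real q - 1) * (real q - real y)"
    using assms by (intro mult_left_mono) auto
  then have "2 * A \<le> B" using assms unfolding A_def B_def by (simp add: field_simps)
  then have "log 2 (2 * A) \<le> log 2 B" using A by simp
  moreover have "log 2 (2 * A) = 1 + log 2 A" using A by (simp add: log_mult)
  ultimately show ?thesis unfolding A_def B_def by simp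
qed

lemma wreach_budget_log:
  fixes q r :: nat assumes rq: "r < q"
  shows "wreach_budget q r (\<lambda>x. if x = 0 then 1
    else if q < 2 * r then real x + 2 + log 2 ((real q - 1) / (real q - real x)) else real x + 2)"
    (is "wreach_budget q r ?f")
proof -
  define h where "h y = (if q < 2 * r then log 2 ((real q - 1) / (real q - real y)) else 0)" for y
  have f: "?f x = real x + 2 + h x" if "1 \<le> x" for x using that unfolding h_def by simp
  have h_nonneg: "0 \<le> h x" if "1 \<le> x" "x \<le> r" for x
    unfolding h_def using log_ratio_nonneg[of x q] that rq by simp
  have "real i + ?f (x - i) + (if q \<le> x + i then 1 else 0) \<le> ?f x"
    if i: "1 \<le> i" "i \<le> x" "x \<le> r" for i x
  proof (cases "i = x")
    case True
    then show ?thesis using f[of x] h_nonneg[of x] i by simp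
  next
    case False
    then have y: "1 \<le> x - i" using i by simp
    have "h (x - i) + (if q \<le> x + i then 1 else 0) \<le> h x"
    proof (cases "q \<le> x + i")
      case True
      then have "q < 2 * r" using False i rq by linarith
      moreover have "1 + log 2 ((real q - 1) / (real q - real (x - i)))
          \<le> log 2 ((real q - 1) / (real q - real x))"
        by (rule log_ratio_double) (use True y i rq in auto)
      ultimately show ?thesis unfolding h_def using True by simp
    qed (unfold h_def, use log_ratio_mono[of "x - i" x q] y i rq in simp)
    then show ?thesis using f[OF y] f[of x] i by simp
  qed
  then show ?thesis
    unfolding wreach_budget_def using f h_nonneg by fastforce
qed

theorem mainTheorem18:
  fixes V :: "'a set" and E :: "'a set set" and r q :: nat and f :: "nat \<Rightarrow> real"
  assumes "graph V E"
    and "r \<ge> 1" and "q \<ge> 1" and "q \<ge> r + 1"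
    and "path_degenerate (2 * q) V E"
    and "f = (\<lambda>x. if x = 0 then 1
               else if q < 2 * r then real x + 2 + log 2 ((real q - 1) / (real q - real x))
               else real x + 2)"
  shows "\<exists>L. good_linear_order V E L f r"
proof (rule path_degenerate_good_linear_order)
  show "wreach_budget q r f" unfolding assms(6) using assms(4) by (intro wreach_budget_log) simp
qed (use assms in simp_all)

end
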